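(* For every $n\ge1$, $M_n$ is not a finitely generated $M_0$-module. Moreover, letting $B=K[x,y/x]_{(x,y/x)}$ (a regular local ring birationally dominating $A$) and $M_\infty=\bar\nu(B\setminus\{0\})$, the set $M_\infty$ is not a finitely generated $M_0$-module.
   Context: $K$ is an algebraically closed field, $A=K[x,y]_{(x,y)}$. Set $\bar\beta_0=1$, $\bar\beta_{i+1}=2\bar\beta_i+2^{-(i+1)}$. Let $P_0=x$, $P_1=y$, $P_{i+1}=P_i^2-P_0^{2^{i+1}}P_{i-1}$ ($i\ge1$). Let $\bar\nu$ be the valuation of $K(x,y)$ dominating $A$ for which $P_0,P_1,\dots$ is a (minimal) generating sequence with $\bar\nu(P_i)=\bar\beta_i$; its value group is $\bigcup_{i\ge0}2^{-i}\mathbb Z$ and $M_0=\bar\nu(A\setminus\{0\})=\sum_{i\ge0}\mathbb N\bar\beta_i$. Let $z=y/x$, $W_n=\{a_0+a_1z+\cdots+a_nz^n\mid a_j\in K[x,y]\}$ and $M_n=\{\bar\nu(f)\mid 0\ne f\in W_n\}$. A subset $F$ with $M_0+F\subseteq F$ is a finitely generated $M_0$-module if $F=\bigcup_{i=1}^k(M_0+m_i)$ for some $m_1,\dots,m_k\in F$. *)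

theory Defs
  imports "HOL-Computational_Algebra.Polynomial" "HOL-Computational_Algebra.Fraction_Field"
begin

text \<open>K[x,y] is modelled as the type 'a poly poly: the inner variable is x,
  the outer variable is y.  K(x,y) is the fraction field 'a poly poly fract.\<close>

definition varX :: "'a::field poly poly" where
  "varX = [:[:0, 1:]:]"

definition varY :: "'a::field poly poly" where
  "varY = [:0, 1:]"

definition emb :: "'a::field poly poly \<Rightarrow> 'a poly poly fract" where
  "emb f = Fract f 1"

definition at_origin :: "'a::field poly poly \<Rightarrow> 'a" where
  "at_origin f = coeff (coeff f 0) 0"

definition ringA :: "'a::field poly poly fract set" where
  "ringA = {emb f / emb g | f g. at_origin g \<noteq> 0}"

definition maxA :: "'a::field poly poly fract set" where
  "maxA = {emb f / emb g | f g. at_origin f = 0 \<and> at_origin g \<noteq> 0}"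

fun betabar :: "nat \<Rightarrow> rat" where
  "betabar 0 = 1"
| "betabar (Suc i) = 2 * betabar i + 1 / 2 ^ (Suc i)"

fun Pseq :: "nat \<Rightarrow> 'a::field poly poly" where
  "Pseq 0 = varX"
| "Pseq (Suc 0) = varY"
| "Pseq (Suc (Suc i)) = (Pseq (Suc i))^2 - varX ^ (2 ^ (Suc (Suc i))) * Pseq i"

definition is_valuation :: "('a::field poly poly fract \<Rightarrow> rat) \<Rightarrow> bool" where
  "is_valuation v \<longleftrightarrow>
     (\<forall>a b. a \<noteq> 0 \<longrightarrow> b \<noteq> 0 \<longrightarrow> v (a * b) = v a + v b) \<and>
     (\<forall>a b. a \<noteq> 0 \<longrightarrow> b \<noteq> 0 \<longrightarrow> a + b \<noteq> 0 \<longrightarrow> v (a + b) \<ge> min (v a) (v b))"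

definition dominates_A :: "('a::field poly poly fract \<Rightarrow> rat) \<Rightarrow> bool" where
  "dominates_A v \<longleftrightarrow> (\<forall>a\<in>ringA - {0}. v a \<ge> 0) \<and> (\<forall>a\<in>maxA - {0}. v a > 0)"

definition zF :: "'a::field poly poly fract" where
  "zF = emb varY / emb varX"

definition Wn :: "nat \<Rightarrow> 'a::field poly poly fract set" where
  "Wn n = {(\<Sum>j\<le>n. emb (a j) * zF ^ j) | a. True}"

text \<open>evaluation of a polynomial G(x,z) (outer variable z, inner variable x) at z = y/x\<close>
definition evalXZ :: "'a::field poly poly \<Rightarrow> 'a poly poly fract" where
  "evalXZ G = poly (map_poly (\<lambda>c. emb [:c:]) G) zF"

definition ringB :: "'a::field poly poly fract set" where
  "ringB = {evalXZ G / evalXZ H | G H. at_origin H \<noteq> 0}"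

definition M0 :: "('a::field poly poly fract \<Rightarrow> rat) \<Rightarrow> rat set" where
  "M0 v = v ` (ringA - {0})"

definition Mn :: "('a::field poly poly fract \<Rightarrow> rat) \<Rightarrow> nat \<Rightarrow> rat set" where
  "Mn v n = v ` (Wn n - {0})"

definition Minf :: "('a::field poly poly fract \<Rightarrow> rat) \<Rightarrow> rat set" where
  "Minf v = v ` (ringB - {0})"

definition fg_module :: "rat set \<Rightarrow> rat set \<Rightarrow> bool" where
  "fg_module M F \<longleftrightarrow> (\<forall>a\<in>M. \<forall>b\<in>F. a + b \<in> F) \<and>
     (\<exists>S. finite S \<and> S \<noteq> {} \<and> S \<subseteq> F \<and> F = (\<Union>m\<in>S. (\<lambda>a. a + m) ` M))"

end

theory Submission imports Defs begin

(*
  Let v be a valuation of K(x,y), nonnegative on A and positive on its maximal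
  ideal, with v(P_i) = betabar_i.  Call a rational "dyadic of level i" if 2^i times it is an
  integer.  By P-adic (pseudo-)division, every nonzero f in K[x,y] of y-degree < 2^j has
  a value that is dyadic of level j and "admissible": whenever it is not dyadic of level i,
  it is at least betabar_(i+1).  Hence every element of M_0 is admissible.  On the other side,
  W_n (n >= 1) and B contain P_i/x, of value betabar_i - 1, and all their values are
  nonnegative dyadic rationals.  If finitely many generators m_k (all dyadic of some common
  level I) generated M_n or M_inf, then betabar_(I+1) - 1 = a + m_k with a in M_0; a is not
  dyadic of level I, so a >= betabar_(I+1), contradicting m_k >= 0.
*)

lemma emb_add: "emb (f + g) = emb f + emb g" by (simp add: emb_def)
lemma emb_mult: "emb (f * g) = emb f * emb g" by (simp add: emb_def)
lemma emb_0 [simp]: "emb 0 = 0" by (simp add: emb_def Zero_fract_def)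
lemma emb_eq_0_iff [simp]: "emb f = 0 \<longleftrightarrow> f = 0" by (simp add: emb_def Zero_fract_def eq_fract)
lemma emb_1 [simp]: "emb 1 = 1" by (simp add: emb_def One_fract_def)
lemma emb_power: "emb (f ^ n) = emb f ^ n" by (induct n) (simp_all add: emb_mult)

text \<open>The rationals whose denominator divides 2^i; the value group of the valuation is the
  union of these sets.\<close>
definition dyadic :: "nat \<Rightarrow> rat set" where
  "dyadic i = {q. \<exists>k::int. q * 2^i = of_int k}"

lemma dyadic_mono: assumes "i \<le> j" "q \<in> dyadic i" shows "q \<in> dyadic j"
proof -
  obtain k :: int where k: "q * 2^i = of_int k" using assms(2) by (auto simp: dyadic_def)
  have "q * 2^j = q * 2^i * 2^(j-i)" using assms(1) by (simp add: power_add[symmetric])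
  also have "\<dots> = of_int (k * 2^(j-i))" using k by simp
  finally show ?thesis by (auto simp: dyadic_def intro!: exI[of _ "k * 2^(j-i)"])
qed

lemma dyadic_add: "a \<in> dyadic i \<Longrightarrow> b \<in> dyadic i \<Longrightarrow> a + b \<in> dyadic i"
  by (auto simp: dyadic_def distrib_right) (metis of_int_add)

lemma dyadic_diff: "a \<in> dyadic i \<Longrightarrow> b \<in> dyadic i \<Longrightarrow> a - b \<in> dyadic i"
  by (auto simp: dyadic_def left_diff_distrib) (metis of_int_diff)

lemma dyadic_of_int: "of_int k \<in> dyadic i"
  by (auto simp: dyadic_def) (metis of_int_mult of_int_numeral of_int_power)

lemma dyadic_of_nat: "of_nat k \<in> dyadic i"
  using dyadic_of_int[of "int k" i] by simp

lemma finite_dyadic_common_level: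
  assumes "finite S" "\<And>x. x \<in> S \<Longrightarrow> \<exists>j. x \<in> dyadic j"
  shows "\<exists>I. S \<subseteq> dyadic I"
  using assms
proof (induct S rule: finite_induct)
  case empty then show ?case by simp
next
  case (insert m S)
  then obtain I J where "S \<subseteq> dyadic I" "m \<in> dyadic J" by blast
  then have "insert m S \<subseteq> dyadic (max I J)" using dyadic_mono[of I "max I J"] dyadic_mono[of J "max I J"] by auto
  then show ?case by blast
qed

lemma betabar_numerator: "\<exists>k::int. betabar i * 2^i = of_int k \<and> (i > 0 \<longrightarrow> odd k)"
proof (induct i)
  case 0 then show ?case by auto
next
  case (Suc i)
  then obtain k :: int where k: "betabar i * 2^i = of_int k" by auto
  have "betabar (Suc i) * 2^(Suc i) = 4 * (betabar i * 2^i) + 1" by (simp add: field_simps)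
  then have "betabar (Suc i) * 2^(Suc i) = of_int (4*k+1)" using k by simp
  then show ?case by (intro exI[of _ "4*k+1"]) auto
qed

lemma betabar_dyadic: "betabar i \<in> dyadic i"
  using betabar_numerator[of i] by (auto simp: dyadic_def)

lemma betabar_Suc_not_dyadic: "betabar (Suc i) \<notin> dyadic i"
proof
  assume "betabar (Suc i) \<in> dyadic i"
  then obtain m :: int where m: "betabar (Suc i) * 2^i = of_int m" by (auto simp: dyadic_def)
  obtain k :: int where k: "betabar (Suc i) * 2^(Suc i) = of_int k" "odd k"
    using betabar_numerator[of "Suc i"] by auto
  have "of_int k = (of_int (2*m) :: rat)" using m k(1) by simp
  then have "k = 2*m" by linarith
  with k(2) show False by simp
qed

lemma betabar_ge_1: "1 \<le> betabar i"
proof (induct i)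
  case 0 then show ?case by simp
next
  case (Suc i)
  have "(0::rat) \<le> 1 / 2^(Suc i)" by simp
  then show ?case using Suc by (simp only: betabar.simps)
qed

lemma betabar_mono: "i \<le> j \<Longrightarrow> betabar i \<le> betabar j"
proof (induct j)
  case 0 then show ?case by simp
next
  case (Suc j)
  have "betabar j \<le> betabar (Suc j)" using betabar_ge_1[of j] by simp
  with Suc show ?case by (cases "i = Suc j") auto
qed

declare betabar.simps(2) [simp del]

text \<open>Sums of the generators betabar_i have this shape, and it is the
  only property of M_0 the argument needs.\<close>
definition admissible :: "nat \<Rightarrow> rat \<Rightarrow> bool" where
  "admissible j x \<longleftrightarrow> x \<in> dyadic j \<and> (\<forall>i. x \<notin> dyadic i \<longrightarrow> betabar (Suc i) \<le> x)"

lemma admissible_Suc: "admissible j x \<Longrightarrow> admissible (Suc j) x"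
  using dyadic_mono[of j "Suc j" x] by (auto simp: admissible_def)

lemma admissible_0: "x \<in> dyadic 0 \<Longrightarrow> admissible 0 x"
  using dyadic_mono[of 0 _ x] by (auto simp: admissible_def)

lemma admissible_add_betabar:
  assumes "b \<in> dyadic j" "0 \<le> b"
  shows "admissible (Suc j) (b + betabar (Suc j))" and "b + betabar (Suc j) \<notin> dyadic j"
proof -
  have lev: "b + betabar (Suc j) \<in> dyadic (Suc j)"
    using assms betabar_dyadic dyadic_mono[of j "Suc j"] by (auto intro: dyadic_add)
  show "b + betabar (Suc j) \<notin> dyadic j"
    using dyadic_diff[of "b + betabar (Suc j)" j b] assms(1) betabar_Suc_not_dyadic by auto
  have "betabar (Suc i) \<le> b + betabar (Suc j)" if "b + betabar (Suc j) \<notin> dyadic i" for i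
  proof -
    have "i \<le> j" using that lev dyadic_mono[of "Suc j" i] by (meson not_less_eq_eq)
    then show ?thesis using betabar_mono[of "Suc i" "Suc j"] assms(2) by simp
  qed
  with lev show "admissible (Suc j) (b + betabar (Suc j))" by (auto simp: admissible_def)
qed


lemma varX_power: "varX ^ k = [:[:0, 1:] ^ k:]"
  by (induct k) (simp_all add: varX_def)

lemma varX_nonzero [simp]: "varX \<noteq> 0" by (simp add: varX_def)

lemma Pseq_monic_degree:
  "lead_coeff (Pseq (Suc i) :: 'a::field poly poly) = 1 \<and> degree (Pseq (Suc i) :: 'a poly poly) = 2^i
     \<and> degree (Pseq i :: 'a poly poly) < 2^i"
proof (induct i)
  case 0 then show ?case by (simp add: varX_def varY_def)
next
  case (Suc i)
  define P where "P = (Pseq (Suc i) :: 'a poly poly)"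
  define R where "R = (varX ^ (2 ^ Suc (Suc i)) * Pseq i :: 'a poly poly)"
  have P: "lead_coeff P = 1" "degree P = 2^i" using Suc unfolding P_def by blast+
  have "degree R \<le> degree (Pseq i :: 'a poly poly)"
    using degree_mult_le[of "varX ^ (2 ^ Suc (Suc i))" "Pseq i :: 'a poly poly"]
    by (simp add: R_def varX_power)
  moreover have P_nz: "P \<noteq> 0" using P(1) by auto
  then have P2: "degree (P^2) = 2 ^ Suc i" using P(2) by (simp add: degree_power_eq)
  ultimately have R: "degree (- R) < degree (P^2)" using Suc.hyps by simp
  have e: "Pseq (Suc (Suc i)) = - R + P^2" by (simp add: P_def R_def)
  have "lead_coeff (Pseq (Suc (Suc i)) :: 'a poly poly) = 1"
    unfolding e lead_coeff_add_le[OF R] lead_coeff_power P(1) by simp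
  moreover have "degree (Pseq (Suc (Suc i)) :: 'a poly poly) = 2 ^ Suc i"
    unfolding e degree_add_eq_right[OF R] by (rule P2)
  ultimately show ?case using P(2) by (simp add: P_def)
qed

lemma Pseq_nonzero: "(Pseq i :: 'a::field poly poly) \<noteq> 0"
proof (cases i)
  case (Suc j)
  have "lead_coeff (Pseq (Suc j) :: 'a poly poly) = 1" using Pseq_monic_degree by blast
  then show ?thesis using Suc by auto
qed simp

text \<open>Every P_i lies in the ideal (x,y); this makes P_i/x an element of K[x,y/x].\<close>
lemma Pseq_in_ideal_xy: "\<exists>A B. (Pseq i :: 'a::field poly poly) = varX * A + varY * B"
proof (induct i rule: nat_less_induct)
  case (1 i)
  consider "i = 0" | "i = 1" | l where "i = Suc (Suc l)" by (metis One_nat_def not0_implies_Suc)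
  then show ?case
  proof cases
    case 1 then show ?thesis by (intro exI[of _ 1] exI[of _ 0]) simp
  next
    case 2 then show ?thesis by (intro exI[of _ 0] exI[of _ 1]) simp
  next
    case (3 l)
    obtain A B where AB: "(Pseq (Suc l) :: 'a poly poly) = varX * A + varY * B"
      using "1" 3 by blast
    define k where "k = 2 ^ Suc (Suc l) - (1::nat)"
    have "(2::nat) ^ Suc (Suc l) = Suc k" by (simp add: k_def)
    then have x: "varX ^ (2 ^ Suc (Suc l)) = varX * (varX ^ k :: 'a poly poly)" by simp
    have "(Pseq i :: 'a poly poly) = Pseq (Suc l) * Pseq (Suc l) - varX * (varX ^ k * Pseq l)"
      by (simp only: 3 Pseq.simps x power2_eq_square mult.assoc)
    also have "\<dots> = Pseq (Suc l) * (varX * A + varY * B) - varX * (varX ^ k * Pseq l)"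
      by (simp only: AB[symmetric])
    also have "\<dots> = varX * (Pseq (Suc l) * A - varX ^ k * Pseq l) + varY * (Pseq (Suc l) * B)"
      by (simp add: algebra_simps)
    finally have "(Pseq i :: 'a poly poly) = varX * (Pseq (Suc l) * A - varX ^ k * Pseq l) + varY * (Pseq (Suc l) * B)" .
    then show ?thesis by blast
  qed
qed

lemma monic_division:
  fixes f P :: "'a::idom poly"
  assumes P: "lead_coeff P = 1" and f: "degree f < 2 * degree P"
  obtains q r where "f = P * q + r" "r = 0 \<or> degree r < degree P" "q = 0 \<or> degree q < degree P"
proof -
  have Pnz: "P \<noteq> 0" using P by auto
  obtain q r where qr: "pseudo_divmod f P = (q, r)" by (metis surj_pair)
  have fqr: "f = P * q + r" using pseudo_divmod(1)[OF Pnz qr] P by simp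
  have r: "r = 0 \<or> degree r < degree P" using pseudo_divmod(2)[OF Pnz qr] .
  have "degree q < degree P" if "q \<noteq> 0"
  proof -
    have dPq: "degree (P * q) = degree P + degree q" using Pnz that by (simp add: degree_mult_eq)
    then have "degree f = degree (P * q)"
      using fqr r by (cases "r = 0") (simp_all add: degree_add_eq_left)
    then show ?thesis using f dPq by simp
  qed
  then show ?thesis using that fqr r by blast
qed

locale valuation_Kxy =
  fixes v :: "'a::field poly poly fract \<Rightarrow> rat"
  assumes valuation: "is_valuation v"
begin

lemma v_mult: "a \<noteq> 0 \<Longrightarrow> b \<noteq> 0 \<Longrightarrow> v (a * b) = v a + v b"
  using valuation by (auto simp: is_valuation_def)

lemma v_add: "a \<noteq> 0 \<Longrightarrow> b \<noteq> 0 \<Longrightarrow> a + b \<noteq> 0 \<Longrightarrow> min (v a) (v b) \<le> v (a + b)"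
  using valuation by (auto simp: is_valuation_def)

lemma v_1: "v 1 = 0" using v_mult[of 1 1] by simp

lemma v_divide: "a \<noteq> 0 \<Longrightarrow> b \<noteq> 0 \<Longrightarrow> v (a / b) = v a - v b"
  using v_mult[of "a/b" b] by simp

lemma v_power: "a \<noteq> 0 \<Longrightarrow> v (a ^ n) = of_nat n * v a"
  by (induct n) (auto simp: v_mult v_1 algebra_simps)

lemma v_uminus: "v (- a) = v a"
proof (cases "a = 0")
  case False
  have "v ((-1) * (-1)) = v (-1) + v (-1)" by (rule v_mult) auto
  then have "v (-1) = 0" using v_1 by simp
  moreover have "v ((-1) * a) = v (-1) + v a" using False by (intro v_mult) auto
  ultimately show ?thesis by simp
qed simp

lemma v_add_eq_min:
  assumes "a \<noteq> 0" "b \<noteq> 0" "v a \<noteq> v b"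
  shows "a + b \<noteq> 0" and "v (a + b) = min (v a) (v b)"
proof -
  show ab: "a + b \<noteq> 0"
  proof
    assume "a + b = 0"
    then have "b = - a" by (simp add: eq_neg_iff_add_eq_0 add.commute)
    then show False using assms v_uminus by simp
  qed
  have "min (v (a + b)) (v (- b)) \<le> v a"
    using v_add[OF ab, of "- b"] assms by simp
  moreover have "min (v (a + b)) (v (- a)) \<le> v b"
    using v_add[OF ab, of "- a"] assms by (simp add: add.commute)
  ultimately show "v (a + b) = min (v a) (v b)"
    using v_add[OF assms(1,2) ab] assms(3) v_uminus by (auto simp: min_def split: if_splits)
qed

lemma v_nonneg_add:
  assumes "a = 0 \<or> 0 \<le> v a" "b = 0 \<or> 0 \<le> v b"
  shows "a + b = 0 \<or> 0 \<le> v (a + b)"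
  using assms v_add[of a b] by (cases "a = 0"; cases "b = 0"; cases "a + b = 0") auto

end

locale sequence_valuation = valuation_Kxy v for v :: "'a::field poly poly fract \<Rightarrow> rat" +
  assumes dominates: "dominates_A v"
    and v_Pseq: "\<And>i. v (emb (Pseq i)) = betabar i"
begin

lemma v_emb_nonneg: "f \<noteq> 0 \<Longrightarrow> 0 \<le> v (emb f)"
proof -
  assume f: "f \<noteq> 0"
  have "emb f \<in> ringA" unfolding ringA_def
    by (rule CollectI, rule exI[of _ f], rule exI[of _ 1]) (simp add: at_origin_def)
  then show ?thesis using dominates f by (auto simp: dominates_A_def)
qed

lemma v_emb_unit: assumes "at_origin g \<noteq> 0" shows "v (emb g) = 0"
proof -
  have g: "g \<noteq> 0" using assms by (auto simp: at_origin_def)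
  have "1 / emb g \<in> ringA" unfolding ringA_def
    by (rule CollectI, rule exI[of _ 1], rule exI[of _ g]) (simp add: assms)
  then have "0 \<le> v (1 / emb g)" using dominates g by (auto simp: dominates_A_def)
  then show ?thesis using v_divide[of 1 "emb g"] v_1 v_emb_nonneg[OF g] g by simp
qed

lemma v_x: "v (emb varX) = 1" using v_Pseq[of 0] by simp

lemma v_z: "v zF = 3/2"
proof -
  have "v (emb varY) = 5/2" using v_Pseq[of 1] by (simp add: betabar.simps)
  then show ?thesis unfolding zF_def using v_divide[of "emb varY" "emb varX"] v_x
    by (simp add: varY_def)
qed

lemma v_emb_const: assumes "c \<noteq> 0" shows "v (emb [:c:]) = of_nat (order 0 c)"
proof -
  obtain q where q: "c = [:- 0, 1:] ^ order 0 c * q" "\<not> [:- 0, 1:] dvd q"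
    using order_decomp[OF assms] by blast
  have q0: "poly q 0 \<noteq> 0" using q(2) dvd_iff_poly_eq_0[of 0 q] by simp
  have e: "[:c:] = varX ^ order 0 c * [:q:]"
    using q(1) by (simp add: varX_power mult.commute)
  have "v (emb [:q:]) = 0"
    using q0 by (intro v_emb_unit) (simp add: at_origin_def poly_0_coeff_0)
  moreover have "q \<noteq> 0" using q0 by auto
  ultimately show ?thesis unfolding e emb_mult emb_power
    using v_mult[of "emb varX ^ order 0 c" "emb [:q:]"] v_power v_x by simp
qed

text \<open>Induction on j, dividing by the monic polynomial P_(j+1) of degree 2^j: in
  f = P_(j+1) q + r the summand P_(j+1) q has value of exact level j+1 while r has level j, so
  the two values differ and v(f) is the smaller one.\<close>
lemma v_emb_admissible: "f \<noteq> 0 \<Longrightarrow> degree f < 2^j \<Longrightarrow> admissible j (v (emb f))"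
proof (induct j arbitrary: f)
  case 0
  then obtain c where c: "f = [:c:]" "c \<noteq> 0" by (metis degree0_coeffs less_one pCons_0_0 power_0)
  then show ?case using v_emb_const dyadic_of_nat admissible_0 by simp
next
  case (Suc j)
  define P where "P = (Pseq (Suc j) :: 'a poly poly)"
  have P: "lead_coeff P = 1" "degree P = 2^j" using Pseq_monic_degree[of j] by (auto simp: P_def)
  obtain q r where f: "f = P * q + r" and r: "r = 0 \<or> degree r < 2^j" and q: "q = 0 \<or> degree q < 2^j"
    using monic_division[OF P(1)] Suc.prems P(2) by (metis power_Suc)
  have r_adm: "admissible j (v (emb r))" if "r \<noteq> 0" using Suc.hyps that r by blast
  show ?case
  proof (cases "q = 0")
    case True then show ?thesis using f r_adm admissible_Suc Suc.prems by simp
  next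
    case False
    define a where "a = v (emb q) + betabar (Suc j)"
    have "v (emb (P * q)) = a"
      using v_mult[of "emb P" "emb q"] False Pseq_nonzero[where 'a='a] v_Pseq by (simp add: a_def P_def emb_mult add.commute)
    moreover have "admissible (Suc j) a" and a_level: "a \<notin> dyadic j"
      using admissible_add_betabar Suc.hyps[OF False] q False v_emb_nonneg[OF False]
      by (auto simp: a_def admissible_def)
    moreover have "P * q \<noteq> 0" using P False by auto
    moreover have "v (emb r) \<noteq> a" if "r \<noteq> 0" using r_adm[OF that] a_level by (auto simp: admissible_def)
    ultimately show ?thesis
      using f v_add_eq_min(2)[of "emb (P * q)" "emb r"] r_adm admissible_Suc
      by (cases "r = 0") (auto simp: emb_add min_def)
  qed
qed

lemma M0_admissible: "a \<in> M0 v \<Longrightarrow> \<exists>j. admissible j a"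
proof -
  assume "a \<in> M0 v"
  then obtain y where y: "y \<in> ringA" "y \<noteq> 0" "a = v y" by (auto simp: M0_def)
  then obtain f g where "y = emb f / emb g" "at_origin g \<noteq> 0" by (auto simp: ringA_def)
  then have fg: "a = v (emb f / emb g)" "at_origin g \<noteq> 0" "emb f / emb g \<noteq> 0" using y by auto
  have "g \<noteq> 0" using fg(2) by (auto simp: at_origin_def)
  then have "f \<noteq> 0" using fg(3) by auto
  then have "a = v (emb f)" using fg v_divide[of "emb f" "emb g"] v_emb_unit by simp
  then show ?thesis using v_emb_admissible[OF \<open>f \<noteq> 0\<close> less_exp] by blast
qed

end


lemma evalXZ_0 [simp]: "evalXZ 0 = 0" by (simp add: evalXZ_def)

lemma evalXZ_pCons: "evalXZ (pCons c G) = emb [:c:] + zF * evalXZ G"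
  by (simp add: evalXZ_def map_poly_pCons)

lemma evalXZ_1: "evalXZ 1 = 1"
  by (simp add: evalXZ_def map_poly_1 one_pCons[symmetric])

lemma evalXZ_add: "evalXZ (G + H) = evalXZ G + evalXZ H"
proof -
  have "map_poly (\<lambda>c. emb [:c:]) (G + H) = map_poly (\<lambda>c. emb [:c:]) G + map_poly (\<lambda>c. emb [:c:]) H"
    by (intro poly_eqI) (simp add: coeff_map_poly emb_add[symmetric])
  then show ?thesis by (simp add: evalXZ_def)
qed

lemma evalXZ_smult: "evalXZ (smult c G) = emb [:c:] * evalXZ G"
  by (induct G) (auto simp: evalXZ_pCons emb_mult[symmetric] algebra_simps)

lemma emb_y: "emb varY = emb varX * zF" by (simp add: zF_def)

lemma zF_nonzero: "zF \<noteq> 0" by (simp add: zF_def varY_def)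

text \<open>K[x,y] is contained in K[x,z], via y = x z.\<close>
lemma emb_in_range_evalXZ: "emb f \<in> range evalXZ"
proof (induct f)
  case (pCons c p)
  then obtain G where G: "emb p = evalXZ G" by blast
  have "pCons c p = [:c:] + varY * p" by (simp add: varY_def)
  then have "emb (pCons c p) = emb [:c:] + zF * (emb varX * evalXZ G)"
    by (simp add: emb_add emb_mult emb_y G algebra_simps)
  also have "\<dots> = evalXZ (pCons c (smult [:0,1:] G))"
    by (simp add: evalXZ_pCons evalXZ_smult varX_def)
  finally show ?case by blast
qed (simp, rule range_eqI[of _ _ 0], simp)

lemma Wn_subset_range_evalXZ: "Wn n \<subseteq> range evalXZ"
proof
  fix w assume "w \<in> Wn n"
  then obtain a where w: "w = (\<Sum>j\<le>n. emb (a j) * zF ^ j)" by (auto simp: Wn_def)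
  have monomial: "emb b * zF ^ j \<in> range evalXZ" for b j
  proof (induct j)
    case 0 then show ?case using emb_in_range_evalXZ by simp
  next
    case (Suc j)
    then obtain G where "emb b * zF ^ j = evalXZ G" by blast
    then have "emb b * zF ^ Suc j = evalXZ (pCons 0 G)" by (simp add: evalXZ_pCons algebra_simps)
    then show ?case by blast
  qed
  have "(\<Sum>j\<in>J. emb (a j) * zF ^ j) \<in> range evalXZ" if "finite J" for J
    using that
  proof (induct J rule: finite_induct)
    case empty
    show ?case by (simp, rule range_eqI[of _ _ 0], simp)
  next
    case (insert j J)
    then obtain G H where "emb (a j) * zF ^ j = evalXZ G" "(\<Sum>j\<in>J. emb (a j) * zF ^ j) = evalXZ H"
      using monomial by blast
    then have "(\<Sum>j\<in>insert j J. emb (a j) * zF ^ j) = evalXZ (G + H)"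
      using insert by (simp add: evalXZ_add)
    then show ?case by blast
  qed
  then show "w \<in> range evalXZ" using w by blast
qed

lemma evalXZ_clear_denominator: "\<exists>g d. evalXZ G * emb varX ^ d = emb g"
proof (induct G)
  case 0 then show ?case by (intro exI[of _ 0]) simp
next
  case (pCons c G)
  then obtain g d where gd: "evalXZ G * emb varX ^ d = emb g" by blast
  have "evalXZ (pCons c G) * emb varX ^ Suc d
      = emb [:c:] * emb varX ^ Suc d + (emb varX * zF) * (evalXZ G * emb varX ^ d)"
    by (simp add: evalXZ_pCons algebra_simps)
  also have "\<dots> = emb ([:c:] * varX ^ Suc d + varY * g)"
    unfolding emb_add emb_mult emb_power emb_y gd[symmetric] by (simp add: algebra_simps)
  finally show ?case by blast
qed

lemma Pseq_div_x: "\<exists>A B. emb (Pseq i :: 'a::field poly poly) / emb varX = emb A + emb B * zF"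
proof -
  obtain A B :: "'a poly poly" where AB: "Pseq i = varX * A + varY * B"
    using Pseq_in_ideal_xy by blast
  have "emb (Pseq i :: 'a poly poly) / emb varX = emb A + emb B * zF"
    unfolding AB emb_add emb_mult by (simp add: zF_def field_simps)
  then show ?thesis by blast
qed

lemma Pseq_div_x_in_Wn:
  assumes "1 \<le> n" shows "emb (Pseq i :: 'a::field poly poly) / emb varX \<in> Wn n"
proof -
  obtain A B :: "'a poly poly" where AB: "emb (Pseq i :: 'a poly poly) / emb varX = emb A + emb B * zF"
    using Pseq_div_x by blast
  define a where "a = (\<lambda>j::nat. if j = 0 then A else if j = 1 then B else 0)"
  have "(\<Sum>j\<le>n. emb (a j) * zF ^ j) = (\<Sum>j\<in>{0,1}. emb (a j) * zF ^ j)"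
    by (rule sum.mono_neutral_right) (use assms in \<open>auto simp: a_def\<close>)
  also have "\<dots> = emb A + emb B * zF" by (simp add: a_def)
  finally show ?thesis unfolding Wn_def using AB by (intro CollectI exI[of _ a]) simp
qed

lemma Pseq_div_x_in_ringB: "emb (Pseq i :: 'a::field poly poly) / emb varX \<in> ringB"
proof -
  obtain G where G: "emb (Pseq i :: 'a poly poly) / emb varX = evalXZ G"
    using Pseq_div_x_in_Wn[of 1 i] Wn_subset_range_evalXZ by blast
  have "at_origin (1 :: 'a poly poly) \<noteq> 0" by (simp add: at_origin_def)
  moreover have "emb (Pseq i :: 'a poly poly) / emb varX = evalXZ G / evalXZ 1" using G evalXZ_1[where 'a='a] by simp
  ultimately show ?thesis unfolding ringB_def by blast
qed

context sequence_valuation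
begin

text \<open>v is nonnegative on K[x,z], since v(z) = 3/2 > 0.\<close>
lemma v_evalXZ_nonneg: "evalXZ G = 0 \<or> 0 \<le> v (evalXZ G)"
proof (induct G)
  case (pCons c G)
  have "emb [:c:] = 0 \<or> 0 \<le> v (emb [:c:])" using v_emb_nonneg[of "[:c:]"] by auto
  moreover have "zF * evalXZ G = 0 \<or> 0 \<le> v (zF * evalXZ G)"
  proof (cases "evalXZ G = 0")
    case False
    then have "v (zF * evalXZ G) = 3/2 + v (evalXZ G)" using v_mult[OF zF_nonzero False] by (simp add: v_z)
    then show ?thesis using pCons False by simp
  qed simp
  ultimately show ?case unfolding evalXZ_pCons by (rule v_nonneg_add)
qed simp

text \<open>Values on K[x,z] are dyadic: clear the denominator x^d and use the admissibility of
  values of polynomials.\<close>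
lemma v_evalXZ_dyadic: assumes nz: "evalXZ G \<noteq> 0" shows "\<exists>j. v (evalXZ G) \<in> dyadic j"
proof -
  obtain g d where gd: "evalXZ G * emb varX ^ d = emb g" using evalXZ_clear_denominator by blast
  have xd: "emb varX ^ d \<noteq> 0" by simp
  then have "g \<noteq> 0" using gd nz by (metis emb_eq_0_iff mult_eq_0_iff)
  then obtain j where "v (emb g) \<in> dyadic j"
    using v_emb_admissible[OF _ less_exp] by (auto simp: admissible_def)
  moreover have "v (emb g) = v (evalXZ G) + of_nat d"
    using gd v_mult[OF nz xd] v_power v_x by simp
  ultimately have "v (emb g) - of_nat d \<in> dyadic j" using dyadic_diff dyadic_of_nat by blast
  then show ?thesis using \<open>v (emb g) = _\<close> by auto
qed

lemma v_evalXZ_unit: assumes "at_origin H \<noteq> 0" shows "v (evalXZ H) = 0"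
proof -
  obtain c G where H: "H = pCons c G" by (cases H) auto
  have c: "at_origin [:c:] \<noteq> 0" using assms H by (simp add: at_origin_def)
  then have vc: "v (emb [:c:]) = 0" and c_nz: "emb [:c:] \<noteq> 0"
    using v_emb_unit by (auto simp: at_origin_def)
  show ?thesis
  proof (cases "evalXZ G = 0")
    case False
    have "v (zF * evalXZ G) = 3/2 + v (evalXZ G)" using v_mult[OF zF_nonzero False] by (simp add: v_z)
    then have "0 < v (zF * evalXZ G)" using v_evalXZ_nonneg[of G] False by simp
    then show ?thesis using v_add_eq_min(2)[OF c_nz, of "zF * evalXZ G"] vc False H
      by (simp add: evalXZ_pCons zF_nonzero)
  qed (simp add: H vc evalXZ_pCons)
qed

lemma Mn_nonneg_dyadic: "x \<in> Mn v n \<Longrightarrow> 0 \<le> x \<and> (\<exists>j. x \<in> dyadic j)"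
proof -
  assume "x \<in> Mn v n"
  then obtain w where w: "w \<in> Wn n" "w \<noteq> 0" "x = v w" by (auto simp: Mn_def)
  then obtain G where "w = evalXZ G" using Wn_subset_range_evalXZ by blast
  then show ?thesis using w v_evalXZ_nonneg[of G] v_evalXZ_dyadic[of G] by auto
qed

lemma Minf_nonneg_dyadic: "x \<in> Minf v \<Longrightarrow> 0 \<le> x \<and> (\<exists>j. x \<in> dyadic j)"
proof -
  assume "x \<in> Minf v"
  then obtain y where y: "y \<in> ringB" "y \<noteq> 0" "x = v y" by (auto simp: Minf_def)
  then obtain G H where "y = evalXZ G / evalXZ H" "at_origin H \<noteq> 0" by (auto simp: ringB_def)
  then have GH: "x = v (evalXZ G / evalXZ H)" "at_origin H \<noteq> 0" "evalXZ G / evalXZ H \<noteq> 0"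
    using y by auto
  then have "evalXZ G \<noteq> 0" "evalXZ H \<noteq> 0" by auto
  then have "x = v (evalXZ G)" using GH v_divide v_evalXZ_unit by simp
  then show ?thesis using v_evalXZ_nonneg[of G] v_evalXZ_dyadic \<open>evalXZ G \<noteq> 0\<close> by auto
qed

lemma v_Pseq_div_x: "v (emb (Pseq i) / emb varX) = betabar i - 1"
  using v_divide[of "emb (Pseq i)" "emb varX"] Pseq_nonzero[where 'a='a] v_Pseq v_x by simp

end

text \<open>A set F of nonnegative dyadic rationals containing every betabar_i - 1 is not finitely
  generated over a semigroup of admissible values: the generators share a dyadic level I, and
  betabar_(I+1) - 1 = a + m would force a, hence a + m, to be at least betabar_(I+1).\<close>
lemma not_fg_module:
  assumes M: "\<And>a. a \<in> M \<Longrightarrow> \<exists>j. admissible j a"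
    and F: "\<And>x. x \<in> F \<Longrightarrow> 0 \<le> x \<and> (\<exists>j. x \<in> dyadic j)"
    and betabar_in_F: "\<And>i. betabar i - 1 \<in> F"
  shows "\<not> fg_module M F"
proof
  assume "fg_module M F"
  then obtain S where S: "finite S" "S \<subseteq> F" "F = (\<Union>m\<in>S. (\<lambda>a. a + m) ` M)"
    by (auto simp: fg_module_def)
  obtain I where I: "S \<subseteq> dyadic I" using finite_dyadic_common_level[OF S(1)] F S(2) by blast
  obtain m a where ma: "m \<in> S" "a \<in> M" "betabar (Suc I) - 1 = a + m"
    using betabar_in_F[of "Suc I"] S(3) by auto
  have "a \<notin> dyadic I"
  proof
    assume "a \<in> dyadic I"
    then have "a + m + 1 \<in> dyadic I" using I ma(1) dyadic_add dyadic_of_int[of 1 I] by auto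
    then show False using ma(3) betabar_Suc_not_dyadic[of I] by (metis add.commute diff_add_cancel)
  qed
  then have "betabar (Suc I) \<le> a" using M[OF ma(2)] by (auto simp: admissible_def)
  moreover have "0 \<le> m" using F ma(1) S(2) by blast
  ultimately show False using ma(3) by linarith
qed

theorem mainTheorem15:
  fixes v :: "'a::alg_closed_field poly poly fract \<Rightarrow> rat"
  assumes "is_valuation v"
    and "dominates_A v"
    and "\<And>i. v (emb (Pseq i)) = betabar i"
  shows "(\<forall>n\<ge>1. \<not> fg_module (M0 v) (Mn v n)) \<and> \<not> fg_module (M0 v) (Minf v)"
proof -
  interpret sequence_valuation v using assms by unfold_locales
  have witness_nonzero: "emb (Pseq i :: 'a poly poly) / emb varX \<noteq> 0" for i
    using Pseq_nonzero[where 'a='a] by simp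
  have in_Mn: "betabar i - 1 \<in> Mn v n" if "1 \<le> n" for i n
    using Pseq_div_x_in_Wn[OF that, of i] witness_nonzero
    unfolding Mn_def v_Pseq_div_x[of i, symmetric] by (intro imageI) blast
  have in_Minf: "betabar i - 1 \<in> Minf v" for i
    using Pseq_div_x_in_ringB[of i] witness_nonzero
    unfolding Minf_def v_Pseq_div_x[of i, symmetric] by (intro imageI) blast
  show ?thesis
  proof (intro conjI allI impI)
    fix n :: nat assume "1 \<le> n"
    show "\<not> fg_module (M0 v) (Mn v n)"
      by (rule not_fg_module[OF M0_admissible Mn_nonneg_dyadic in_Mn[OF \<open>1 \<le> n\<close>]])
  next
    show "\<not> fg_module (M0 v) (Minf v)"
      by (rule not_fg_module[OF M0_admissible Minf_nonneg_dyadic in_Minf])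
  qed
qed

end
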